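(* Let $k\ge1$, $A,B,C_1,\dots,C_k\in\mathbb{C}^{r\times r}$ with $C_j+mI$ invertible for all $m\ge0$ and all $j$, $AB=BA$, $C_jC_l=C_lC_j$ for all $j,l$. Fix $i$ and $n\ge1$ and suppose $C_i-mI$ is invertible for $0\le m\le n$. Then $$F_{\mathcal C}[C_i-nI]=F_{\mathcal C}+x_iAB\Big[\sum_{n_1=1}^nF_{\mathcal C}[A+I,\,B+I,\,C_i+(2-n_1)I]\,(C_i-n_1I)^{-1}(C_i-(n_1-1)I)^{-1}\Big].$$
   Context: For $M\in\mathbb{C}^{r\times r}$: $(M)_0=I$, $(M)_m=M(M+I)\cdots(M+(m-1)I)$, $(M)^{-1}_m=((M)_m)^{-1}$. $$F_{\mathcal C}=F_{\mathcal C}[A,B;C_1,\dots,C_k;x_1,\dots,x_k]=\sum_{m_1,\dots,m_k\ge0}(A)_{m_1+\cdots+m_k}(B)_{m_1+\cdots+m_k}\prod_{j=1}^k(C_j)^{-1}_{m_j}\prod_{j=1}^k\frac{x_j^{m_j}}{m_j!},$$ $x_j$ scalar variables, matrix products in order of increasing index; identities are of formal power series in the $x_j$. $F_{\mathcal C}[\dots]$ lists only the shifted parameters, all others unchanged. *)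

theory Defs
  imports "HOL-Analysis.Analysis"
begin

fun mpoch :: "complex^'n^'n \<Rightarrow> nat \<Rightarrow> complex^'n^'n" where
  "mpoch M 0 = mat 1"
| "mpoch M (Suc m) = mpoch M m ** (M + mat (of_nat m))"

definition mpoch_inv :: "complex^'n^'n \<Rightarrow> nat \<Rightarrow> complex^'n^'n" where
  "mpoch_inv M m = matrix_inv (mpoch M m)"

fun ordprod :: "(nat \<Rightarrow> complex^'n^'n) \<Rightarrow> nat \<Rightarrow> complex^'n^'n" where
  "ordprod f 0 = mat 1"
| "ordprod f (Suc k) = ordprod f k ** f k"

text \<open>Coefficient of x_0^(m 0) ... x_(k-1)^(m (k-1)) in the formal power series
  F_C[A,B;C_0,...,C_(k-1);x_0,...,x_(k-1)] (variables indexed 0..k-1).\<close>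
definition FC_coeff :: "nat \<Rightarrow> complex^'n^'n \<Rightarrow> complex^'n^'n \<Rightarrow> (nat \<Rightarrow> complex^'n^'n)
    \<Rightarrow> (nat \<Rightarrow> nat) \<Rightarrow> complex^'n^'n" where
  "FC_coeff k A B C m =
     (let s = (\<Sum>j<k. m j) in
      (1 / real (\<Prod>j<k. fact (m j))) *\<^sub>R
        (mpoch A s ** mpoch B s ** ordprod (\<lambda>j. mpoch_inv (C j) (m j)) k))"

end

theory Submission
  imports Defs
begin

text \<open>
  Since the \<open>C\<^sub>j\<close> commute, the \<open>i\<close>-th factor of each coefficient can be moved to its end,
  and the identity reduces to one for the single Pochhammer symbol of \<open>c = C\<^sub>i\<close>. There the contiguity relation
  \<open>(d - I)\<^sup>-\<^sup>1\<^sub>t\<^sub>+\<^sub>1 - (d)\<^sup>-\<^sup>1\<^sub>t\<^sub>+\<^sub>1 = (t + 1) (d + I)\<^sup>-\<^sup>1\<^sub>t (d - I)\<^sup>-\<^sup>1 d\<^sup>-\<^sup>1\<close>,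
  valid because all factors are rational functions of \<open>d\<close> and hence commute, telescopes over
  \<open>d = c, c - I, \<dots>, c - (n - 1)I\<close>. The factor \<open>t + 1\<close> cancels against \<open>(t + 1)!\<close>, and
  \<open>(A)\<^sub>s\<^sub>+\<^sub>1 (B)\<^sub>s\<^sub>+\<^sub>1 = AB (A + I)\<^sub>s (B + I)\<^sub>s\<close> produces the prefactor \<open>AB\<close>.
\<close>

subsection \<open>Matrix algebra\<close>

lemma matrix_add_rdistrib:
  fixes A B :: "'a::semiring_1^'n^'m"
  shows "(A + B) ** C = A ** C + B ** C"
  by (vector matrix_matrix_mult_def sum.distrib[symmetric] field_simps)

lemma matrix_diff_ldistrib:
  fixes A :: "'a::ring_1^'n^'m"
  shows "A ** (B - C) = A ** B - A ** C"
  by (vector matrix_matrix_mult_def sum_subtractf[symmetric] field_simps)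

lemma matrix_diff_rdistrib:
  fixes A B :: "'a::ring_1^'n^'m"
  shows "(A - B) ** C = A ** C - B ** C"
  by (vector matrix_matrix_mult_def sum_subtractf[symmetric] field_simps)

lemma matrix_sum_ldistrib:
  fixes A :: "'a::semiring_1^'n^'m"
  shows "A ** sum f S = (\<Sum>x\<in>S. A ** f x)"
  by (induction S rule: infinite_finite_induct) (simp_all add: matrix_add_ldistrib)

lemma mat_commute:
  fixes X :: "'a::comm_semiring_1^'n^'n"
  shows "mat a ** X = X ** mat a"
  unfolding matrix_matrix_mult_def mat_def
  by (auto simp: vec_eq_iff if_distrib if_distribR mult.commute cong: if_cong)

lemma mat_of_nat_eq_scaleR:
  "mat (of_nat q) = real q *\<^sub>R (mat 1 :: 'a::real_algebra_1^'n^'n)"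
  by (vector mat_def scaleR_conv_of_real)

lemma commute_add_mat:
  fixes X Y :: "'a::comm_semiring_1^'n^'n"
  assumes "X ** Y = Y ** X"
  shows "X ** (Y + mat a) = (Y + mat a) ** X"
  using assms by (simp add: matrix_add_ldistrib matrix_add_rdistrib mat_commute)

lemma add_mat_commute_add_mat:
  fixes X :: "'a::comm_semiring_1^'n^'n"
  shows "(X + mat a) ** (X + mat b) = (X + mat b) ** (X + mat a)"
proof -
  have "X ** (X + mat b) = (X + mat b) ** X"
    by (rule commute_add_mat) (rule refl)
  then have "(X + mat b) ** (X + mat a) = (X + mat a) ** (X + mat b)"
    by (intro commute_add_mat) (rule sym)
  then show ?thesis
    by (rule sym)
qed

lemma matrix_inv_right: "invertible X \<Longrightarrow> X ** matrix_inv X = mat 1"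
  and matrix_inv_left: "invertible X \<Longrightarrow> matrix_inv X ** X = mat 1"
  for X :: "'a::field^'n^'n"
  unfolding invertible_def matrix_inv_def by (metis (mono_tags, lifting) someI_ex)+

lemma matrix_inv_unique:
  fixes X Y :: "'a::field^'n^'n"
  assumes "X ** Y = mat 1"
  shows "matrix_inv X = Y"
proof -
  have "invertible X"
    using assms matrix_left_right_inverse invertible_def by blast
  have "matrix_inv X = matrix_inv X ** (X ** Y)"
    by (simp add: assms)
  also have "\<dots> = Y"
    by (simp add: matrix_mul_assoc matrix_inv_left \<open>invertible X\<close>)
  finally show ?thesis .
qed

lemma matrix_inv_mult:
  fixes X Y :: "'a::field^'n^'n"
  assumes "invertible X" "invertible Y"
  shows "matrix_inv (X ** Y) = matrix_inv Y ** matrix_inv X"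
proof (rule matrix_inv_unique)
  have "X ** Y ** (matrix_inv Y ** matrix_inv X) = X ** (Y ** matrix_inv Y) ** matrix_inv X"
    by (simp add: matrix_mul_assoc)
  then show "X ** Y ** (matrix_inv Y ** matrix_inv X) = mat 1"
    using assms by (simp add: matrix_inv_right)
qed

lemma commute_matrix_inv:
  fixes X Y :: "'a::field^'n^'n"
  assumes "X ** Y = Y ** X" "invertible Y"
  shows "X ** matrix_inv Y = matrix_inv Y ** X"
proof -
  have "X ** matrix_inv Y = matrix_inv Y ** (Y ** X) ** matrix_inv Y"
    using assms(2) by (simp add: matrix_mul_assoc matrix_inv_left)
  also have "\<dots> = matrix_inv Y ** X ** (Y ** matrix_inv Y)"
    by (simp add: matrix_mul_assoc flip: assms(1))
  also have "\<dots> = matrix_inv Y ** X"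
    by (simp add: assms(2) matrix_inv_right)
  finally show ?thesis .
qed

lemma matrix_inv_commute:
  fixes X Y :: "'a::field^'n^'n"
  assumes "X ** Y = Y ** X" "invertible X" "invertible Y"
  shows "matrix_inv X ** matrix_inv Y = matrix_inv Y ** matrix_inv X"
  using assms by (metis commute_matrix_inv)

lemma matrix_inv_diff:
  fixes X Y :: "'a::field^'n^'n"
  assumes "invertible X" "invertible Y"
  shows "matrix_inv X - matrix_inv Y = matrix_inv X ** (Y - X) ** matrix_inv Y"
proof -
  have "matrix_inv X ** (Y - X) ** matrix_inv Y =
      matrix_inv X ** (Y ** matrix_inv Y) - (matrix_inv X ** X) ** matrix_inv Y"
    by (simp add: matrix_diff_ldistrib matrix_diff_rdistrib matrix_mul_assoc)
  then show ?thesis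
    using assms by (simp add: matrix_inv_right matrix_inv_left)
qed

subsection \<open>Matrix Pochhammer symbols\<close>

lemma mpoch_commute:
  assumes "Y ** X = X ** Y"
  shows "Y ** mpoch X t = mpoch X t ** Y"
proof (induction t)
  case (Suc t)
  have comm: "Y ** (X + mat (of_nat t)) = (X + mat (of_nat t)) ** Y"
    using assms by (rule commute_add_mat)
  have "Y ** mpoch X (Suc t) = (Y ** mpoch X t) ** (X + mat (of_nat t))"
    by (simp add: matrix_mul_assoc)
  also have "\<dots> = mpoch X t ** (Y ** (X + mat (of_nat t)))"
    by (simp add: Suc.IH matrix_mul_assoc)
  also have "\<dots> = mpoch X (Suc t) ** Y"
    by (simp add: comm matrix_mul_assoc)
  finally show ?case .
qed simp

lemma mpoch_Suc_left: "mpoch X (Suc t) = X ** mpoch (X + mat 1) t"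
proof (induction t)
  case (Suc t)
  have "X + mat (of_nat (Suc t)) = X + mat 1 + mat (of_nat t)"
    by (vector mat_def)
  with Suc.IH show ?case
    by (simp only: mpoch.simps(2) matrix_mul_assoc)
qed simp

lemma invertible_mpoch:
  "(\<And>j. j < t \<Longrightarrow> invertible (X + mat (of_nat j))) \<Longrightarrow> invertible (mpoch X t)"
proof (induction t)
  case 0
  show ?case
    unfolding invertible_def by (intro exI[of _ "mat 1"]) simp
qed (auto intro!: invertible_mult)

lemma mpoch_inv_commute:
  assumes "X ** D = D ** X" "invertible (mpoch X p)" "invertible (mpoch D q)"
  shows "mpoch_inv X p ** mpoch_inv D q = mpoch_inv D q ** mpoch_inv X p"
proof -
  have "X ** mpoch D q = mpoch D q ** X"
    using assms(1) by (rule mpoch_commute)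
  then have "mpoch D q ** mpoch X p = mpoch X p ** mpoch D q"
    by (rule mpoch_commute[OF sym])
  then show ?thesis
    unfolding mpoch_inv_def by (rule matrix_inv_commute[OF sym assms(2,3)])
qed

lemma mpoch_Suc_mult_mpoch_Suc:
  assumes "A ** B = B ** A"
  shows "mpoch A (Suc s) ** mpoch B (Suc s) = A ** B ** (mpoch (A + mat 1) s ** mpoch (B + mat 1) s)"
proof -
  have comm: "B ** mpoch (A + mat 1) s = mpoch (A + mat 1) s ** B"
    using commute_add_mat[OF assms[symmetric]] by (rule mpoch_commute)
  have "mpoch A (Suc s) ** mpoch B (Suc s) = A ** (mpoch (A + mat 1) s ** B) ** mpoch (B + mat 1) s"
    by (simp only: mpoch_Suc_left matrix_mul_assoc)
  then show ?thesis
    by (simp only: matrix_mul_assoc flip: comm)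
qed

lemma mpoch_inv_contiguous:
  assumes inv_pred: "invertible (d - mat 1)"
    and inv_up: "\<And>j. j \<le> t \<Longrightarrow> invertible (d + mat (of_nat j))"
  shows "mpoch_inv (d - mat 1) (Suc t) - mpoch_inv d (Suc t) =
    real (Suc t) *\<^sub>R (mpoch_inv (d + mat 1) t ** matrix_inv (d - mat 1) ** matrix_inv d)"
proof -
  define a where "a = matrix_inv (d - mat 1)"
  define b where "b = matrix_inv (d + mat (of_nat t))"
  define e where "e = matrix_inv d"
  define p where "p = mpoch_inv d t"
  define q where "q = mpoch_inv (d + mat 1) t"
  have inv_d: "invertible d"
    using inv_up[of 0] by simp
  have inv_P: "invertible (mpoch d t)"
    using inv_up by (intro invertible_mpoch) simp
  have inv_Q: "invertible (mpoch (d + mat 1) t)"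
  proof (rule invertible_mpoch)
    fix j assume "j < t"
    have "d + mat 1 + mat (of_nat j) = d + mat (of_nat (Suc j))"
      by (vector mat_def)
    moreover have "invertible (d + mat (of_nat (Suc j)))"
      using inv_up[of "Suc j"] \<open>j < t\<close> by simp
    ultimately show "invertible (d + mat 1 + mat (of_nat j))"
      by (simp only:)
  qed
  have shift_commute: "(d + mat x) ** mpoch (d + mat y) s = mpoch (d + mat y) s ** (d + mat x)"
    for x y s
    by (rule mpoch_commute) (rule add_mat_commute_add_mat)
  have d_pred: "d + mat (- 1) = d - mat 1"
    by (vector mat_def)
  have pa: "p ** a = a ** p"
    using shift_commute[of "- 1" 0 t, unfolded mat_0 add_0_right d_pred]
    unfolding p_def a_def mpoch_inv_def by (rule matrix_inv_commute[OF sym inv_P inv_pred])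
  have pb: "p ** b = b ** p"
    using shift_commute[of "of_nat t" 0 t, unfolded mat_0 add_0_right]
    unfolding p_def b_def mpoch_inv_def by (rule matrix_inv_commute[OF sym inv_P inv_up[OF order_refl]])
  have qa: "q ** a = a ** q"
    using shift_commute[of "- 1" 1 t, unfolded d_pred]
    unfolding q_def a_def mpoch_inv_def by (rule matrix_inv_commute[OF sym inv_Q inv_pred])
  have pred_eq: "mpoch_inv (d - mat 1) (Suc t) = p ** a"
    unfolding mpoch_inv_def mpoch_Suc_left diff_add_cancel p_def a_def
    by (rule matrix_inv_mult[OF inv_pred inv_P])
  have eq_bp: "mpoch_inv d (Suc t) = b ** p"
    unfolding mpoch_inv_def mpoch.simps(2) p_def b_def
    by (rule matrix_inv_mult[OF inv_P inv_up[OF order_refl]])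
  have eq_qe: "mpoch_inv d (Suc t) = q ** e"
    unfolding mpoch_inv_def mpoch_Suc_left q_def e_def
    by (rule matrix_inv_mult[OF inv_d inv_Q])
  have resolvent: "a - b = real (Suc t) *\<^sub>R (a ** b)"
  proof -
    have "d + mat (of_nat t) - (d - mat 1) = mat (of_nat (Suc t))"
      by (vector mat_def)
    then have "a - b = a ** mat (of_nat (Suc t)) ** b"
      using matrix_inv_diff[OF inv_pred inv_up[OF order_refl]] by (simp only: a_def b_def)
    then show ?thesis
      by (simp only: mat_of_nat_eq_scaleR matrix_scalar_ac matrix_mul_rid flip: scalar_matrix_assoc)
  qed
  have "mpoch_inv (d - mat 1) (Suc t) - mpoch_inv d (Suc t) = p ** (a - b)"
    by (simp only: pred_eq eq_bp matrix_diff_ldistrib pb)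
  also have "\<dots> = real (Suc t) *\<^sub>R (p ** (a ** b))"
    by (simp only: resolvent matrix_scalar_ac flip: scalar_matrix_assoc)
  also have "p ** (a ** b) = a ** (b ** p)"
    by (simp only: matrix_mul_assoc pa flip: pb)
  also have "b ** p = q ** e"
    by (simp only: eq_qe flip: eq_bp)
  also have "a ** (q ** e) = q ** a ** e"
    by (simp only: matrix_mul_assoc qa)
  finally show ?thesis
    by (simp only: q_def a_def e_def)
qed

lemma invertible_add_mat_of_int:
  fixes c :: "'a::ring_1^'n^'n"
  assumes "\<And>j. invertible (c + mat (of_nat j))"
    and "\<And>j. j \<le> n \<Longrightarrow> invertible (c - mat (of_nat j))"
    and "- int n \<le> z"
  shows "invertible (c + mat (of_int z))"
proof (cases "0 \<le> z")
  case True
  then show ?thesis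
    using assms(1)[of "nat z"] by simp
next
  case False
  have "c + mat (of_int z) = c - mat (of_nat (nat (- z)))"
    using False by (vector mat_def)
  then show ?thesis
    using assms(2)[of "nat (- z)"] assms(3) by simp
qed

lemma invertible_mpoch_add_mat_of_int:
  fixes c :: "complex^'n^'n"
  assumes "\<And>j. invertible (c + mat (of_nat j))"
    and "\<And>j. j \<le> n \<Longrightarrow> invertible (c - mat (of_nat j))"
    and "- int n \<le> z"
  shows "invertible (mpoch (c + mat (of_int z)) q)"
proof (rule invertible_mpoch)
  fix j
  have "c + mat (of_int z) + mat (of_nat j) = c + mat (of_int (z + int j))"
    by (vector mat_def)
  moreover have "invertible (c + mat (of_int (z + int j)))"
    using assms by (intro invertible_add_mat_of_int[of c n]) auto
  ultimately show "invertible (c + mat (of_int z) + mat (of_nat j))"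
    by (simp only:)
qed

lemma mpoch_inv_diff_sum:
  fixes c :: "complex^'n^'n"
  assumes inv_up: "\<And>j. invertible (c + mat (of_nat j))"
    and inv_down: "\<And>j. j \<le> n \<Longrightarrow> invertible (c - mat (of_nat j))"
  shows "mpoch_inv (c - mat (of_nat n)) (Suc t) = mpoch_inv c (Suc t) +
    real (Suc t) *\<^sub>R (\<Sum>n1\<in>{1..n}. mpoch_inv (c + mat (of_int (2 - int n1))) t
      ** matrix_inv (c - mat (of_nat n1)) ** matrix_inv (c - mat (of_nat (n1 - 1))))"
proof -
  define T where "T j = mpoch_inv (c - mat (of_nat j)) (Suc t)" for j
  have step: "T n1 - T (n1 - 1) = real (Suc t) *\<^sub>R
      (mpoch_inv (c + mat (of_int (2 - int n1))) t
        ** matrix_inv (c - mat (of_nat n1)) ** matrix_inv (c - mat (of_nat (n1 - 1))))"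
    if "n1 \<in> {1..n}" for n1
  proof -
    define d where "d = c - mat (of_nat (n1 - 1))"
    have shifts: "d - mat 1 = c - mat (of_nat n1)" "d + mat 1 = c + mat (of_int (2 - int n1))"
      using that by (vector d_def mat_def of_nat_diff)+
    have inv_d: "invertible (d + mat (of_nat j))" for j
    proof -
      have "d + mat (of_nat j) = c + mat (of_int (int j + 1 - int n1))"
        using that by (vector d_def mat_def of_nat_diff)
      moreover have "invertible (c + mat (of_int (int j + 1 - int n1)))"
        using inv_up inv_down that by (intro invertible_add_mat_of_int[of c n]) auto
      ultimately show ?thesis
        by (simp only:)
    qed
    have "T n1 - T (n1 - 1) = mpoch_inv (d - mat 1) (Suc t) - mpoch_inv d (Suc t)"
      unfolding T_def shifts(1) by (simp only: d_def)
    also have "\<dots> = real (Suc t) *\<^sub>R (mpoch_inv (d + mat 1) t ** matrix_inv (d - mat 1) ** matrix_inv d)"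
      using inv_down[of n1] that by (intro mpoch_inv_contiguous inv_d) (simp add: shifts)
    also have "\<dots> = real (Suc t) *\<^sub>R (mpoch_inv (c + mat (of_int (2 - int n1))) t
        ** matrix_inv (c - mat (of_nat n1)) ** matrix_inv (c - mat (of_nat (n1 - 1))))"
      unfolding shifts by (simp only: d_def)
    finally show ?thesis .
  qed
  have "T n - T 0 = (\<Sum>n1\<in>{1..n}. T n1 - T (n1 - 1))"
    using sum_telescope''[of 0 n T] by simp
  also have "\<dots> = real (Suc t) *\<^sub>R (\<Sum>n1\<in>{1..n}. mpoch_inv (c + mat (of_int (2 - int n1))) t
      ** matrix_inv (c - mat (of_nat n1)) ** matrix_inv (c - mat (of_nat (n1 - 1))))"
    unfolding scaleR_sum_right by (rule sum.cong[OF refl step])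
  finally show ?thesis
    unfolding T_def by (simp only: diff_eq_eq add.commute of_nat_0 mat_0 diff_zero)
qed

subsection \<open>Coefficients of \<open>F\<^sub>C\<close>\<close>

lemma ordprod_fun_upd_commute:
  assumes "\<And>j. j < k \<Longrightarrow> j \<noteq> i \<Longrightarrow> f j ** X = X ** f j"
  shows "ordprod (f(i := X)) k = ordprod (f(i := mat 1)) k ** (if i < k then X else mat 1)"
  using assms
proof (induction k)
  case (Suc k)
  have IH: "ordprod (f(i := X)) k = ordprod (f(i := mat 1)) k ** (if i < k then X else mat 1)"
    by (rule Suc.IH) (use Suc.prems in auto)
  have "ordprod (f(i := X)) (Suc k) =
      ordprod (f(i := mat 1)) k ** (if i < k then X else mat 1) ** (f(i := X)) k"
    by (simp only: ordprod.simps(2) IH)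
  also have "\<dots> = ordprod (f(i := mat 1)) (Suc k) ** (if i < Suc k then X else mat 1)"
  proof (cases "i < k")
    case True
    then show ?thesis
      using Suc.prems[of k] by (simp add: matrix_mul_assoc[symmetric])
  next
    case False
    then show ?thesis
      by (cases "i = k") auto
  qed
  finally show ?case .
qed simp

text \<open>
  \<open>FC_coeff_slot k A B C m i q X\<close> is the coefficient of index \<open>m(i := q)\<close> with its factor
  \<open>(C\<^sub>i)\<^sup>-\<^sup>1\<^sub>q\<close> replaced by \<open>X\<close>; it is linear in \<open>X\<close>.
\<close>

definition FC_coeff_slot :: "nat \<Rightarrow> complex^'n^'n \<Rightarrow> complex^'n^'n \<Rightarrow> (nat \<Rightarrow> complex^'n^'n)
    \<Rightarrow> (nat \<Rightarrow> nat) \<Rightarrow> nat \<Rightarrow> nat \<Rightarrow> complex^'n^'n \<Rightarrow> complex^'n^'n" where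
  "FC_coeff_slot k A B C m i q X =
     (let s = q + (\<Sum>j\<in>{..<k} - {i}. m j) in
      (1 / real (fact q * (\<Prod>j\<in>{..<k} - {i}. fact (m j)))) *\<^sub>R
        (mpoch A s ** mpoch B s ** ordprod ((\<lambda>j. mpoch_inv (C j) (m j))(i := mat 1)) k ** X))"

lemma FC_coeff_fun_upd:
  assumes "i < k"
    and "\<And>j. j < k \<Longrightarrow> j \<noteq> i \<Longrightarrow>
      mpoch_inv (C j) (m j) ** mpoch_inv D q = mpoch_inv D q ** mpoch_inv (C j) (m j)"
  shows "FC_coeff k A B (C(i := D)) (m(i := q)) = FC_coeff_slot k A B C m i q (mpoch_inv D q)"
proof -
  define f where "f = (\<lambda>j. mpoch_inv (C j) (m j))"
  have upd: "(\<lambda>j. mpoch_inv ((C(i := D)) j) ((m(i := q)) j)) = f(i := mpoch_inv D q)"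
    by (rule ext) (simp add: f_def)
  have "ordprod (f(i := mpoch_inv D q)) k =
      ordprod (f(i := mat 1)) k ** (if i < k then mpoch_inv D q else mat 1)"
    by (rule ordprod_fun_upd_commute) (unfold f_def, rule assms(2))
  then have ord: "ordprod (f(i := mpoch_inv D q)) k = ordprod (f(i := mat 1)) k ** mpoch_inv D q"
    unfolding if_P[OF assms(1)] .
  have sum: "(\<Sum>j<k. (m(i := q)) j) = q + (\<Sum>j\<in>{..<k} - {i}. m j)"
    using assms(1) by (simp add: sum.remove[of "{..<k}" i])
  have prod: "(\<Prod>j<k. fact ((m(i := q)) j)) = fact q * (\<Prod>j\<in>{..<k} - {i}. fact (m j) :: nat)"
    using assms(1) by (simp add: prod.remove[of "{..<k}" i])
  show ?thesis
    unfolding FC_coeff_def FC_coeff_slot_def Let_def sum prod upd ord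
    by (simp only: f_def matrix_mul_assoc)
qed

lemma FC_coeff_slot_add:
  "FC_coeff_slot k A B C m i q (X + Y) = FC_coeff_slot k A B C m i q X + FC_coeff_slot k A B C m i q Y"
  unfolding FC_coeff_slot_def Let_def by (simp only: matrix_add_ldistrib scaleR_add_right)

lemma FC_coeff_slot_mult:
  "FC_coeff_slot k A B C m i q X ** Y = FC_coeff_slot k A B C m i q (X ** Y)"
  unfolding FC_coeff_slot_def Let_def by (simp only: matrix_mul_assoc flip: scalar_matrix_assoc)

lemma FC_coeff_slot_sum:
  "(\<Sum>x\<in>S. FC_coeff_slot k A B C m i q (f x)) = FC_coeff_slot k A B C m i q (\<Sum>x\<in>S. f x)"
  unfolding FC_coeff_slot_def Let_def by (simp only: matrix_sum_ldistrib scaleR_sum_right)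

lemma FC_coeff_slot_Suc:
  assumes "A ** B = B ** A"
  shows "FC_coeff_slot k A B C m i (Suc t) (real (Suc t) *\<^sub>R X) =
    A ** B ** FC_coeff_slot k (A + mat 1) (B + mat 1) C m i t X"
proof -
  define R where "R = (\<Prod>j\<in>{..<k} - {i}. fact (m j) :: nat)"
  define s where "s = t + (\<Sum>j\<in>{..<k} - {i}. m j)"
  define P where
    "P = mpoch (A + mat 1) s ** mpoch (B + mat 1) s ** ordprod ((\<lambda>j. mpoch_inv (C j) (m j))(i := mat 1)) k"
  have scale: "1 / real (fact (Suc t) * R) * real (Suc t) = 1 / real (fact t * R)"
  proof -
    have "0 < R"
      unfolding R_def by (intro prod_pos) simp
    moreover have "real (fact (Suc t) * R) = real (Suc t) * real (fact t * R)"
      by (simp only: fact_Suc of_nat_id of_nat_mult mult.assoc)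
    ultimately show ?thesis
      by (simp del: of_nat_Suc)
  qed
  have "FC_coeff_slot k A B C m i (Suc t) (real (Suc t) *\<^sub>R X) =
      (1 / real (fact (Suc t) * R) * real (Suc t)) *\<^sub>R (A ** B ** (P ** X))"
    unfolding FC_coeff_slot_def Let_def add_Suc mpoch_Suc_mult_mpoch_Suc[OF assms]
      R_def[symmetric] s_def[symmetric] P_def
    by (simp only: matrix_mul_assoc matrix_scalar_ac scaleR_scaleR flip: scalar_matrix_assoc)
  also have "\<dots> = A ** B ** FC_coeff_slot k (A + mat 1) (B + mat 1) C m i t X"
    unfolding scale FC_coeff_slot_def Let_def R_def[symmetric] s_def[symmetric] P_def
    by (simp only: matrix_mul_assoc matrix_scalar_ac flip: scalar_matrix_assoc)
  finally show ?thesis .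
qed

lemma FC_coeff_fun_upd_zero:
  assumes "m i = 0"
  shows "FC_coeff k A B (C(i := D)) m = FC_coeff k A B C m"
proof -
  have "(\<lambda>j. mpoch_inv ((C(i := D)) j) (m j)) = (\<lambda>j. mpoch_inv (C j) (m j))"
    by (rule ext) (simp add: assms mpoch_inv_def)
  then show ?thesis
    unfolding FC_coeff_def by (simp only:)
qed

context
  fixes C :: "nat \<Rightarrow> complex^'n^'n" and k i n :: nat
  assumes i_less: "i < k"
    and C_up: "\<And>j m. j < k \<Longrightarrow> invertible (C j + mat (of_nat m))"
    and C_commute: "\<And>j l. j < k \<Longrightarrow> l < k \<Longrightarrow> C j ** C l = C l ** C j"
    and Ci_down: "\<And>m. m \<le> n \<Longrightarrow> invertible (C i - mat (of_nat m))"
begin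

lemma mpoch_inv_commute_Ci_shift:
  assumes "j < k" "- int n \<le> z"
  shows "mpoch_inv (C j) p ** mpoch_inv (C i + mat (of_int z)) q =
    mpoch_inv (C i + mat (of_int z)) q ** mpoch_inv (C j) p"
proof (rule mpoch_inv_commute)
  show "C j ** (C i + mat (of_int z)) = (C i + mat (of_int z)) ** C j"
    using C_commute assms(1) i_less by (intro commute_add_mat) blast
  show "invertible (mpoch (C j) p)"
    using C_up assms(1) by (intro invertible_mpoch) blast
  show "invertible (mpoch (C i + mat (of_int z)) q)"
    using C_up i_less Ci_down assms(2) by (intro invertible_mpoch_add_mat_of_int[of "C i" n]) auto
qed

lemma FC_coeff_Ci_shift:
  assumes "- int n \<le> z"
  shows "FC_coeff k A B (C(i := C i + mat (of_int z))) (m(i := q)) =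
    FC_coeff_slot k A B C m i q (mpoch_inv (C i + mat (of_int z)) q)"
proof (rule FC_coeff_fun_upd[OF i_less])
  fix j assume "j < k"
  then show "mpoch_inv (C j) (m j) ** mpoch_inv (C i + mat (of_int z)) q =
      mpoch_inv (C i + mat (of_int z)) q ** mpoch_inv (C j) (m j)"
    using assms by (rule mpoch_inv_commute_Ci_shift)
qed

lemma FC_coeff_Ci_down_Suc:
  assumes AB: "A ** B = B ** A" and mi: "m i = Suc t"
  shows "FC_coeff k A B (C(i := C i - mat (of_nat n))) m =
    FC_coeff k A B C m + A ** B **
      (\<Sum>n1\<in>{1..n}.
         FC_coeff k (A + mat 1) (B + mat 1) (C(i := C i + mat (of_int (2 - int n1)))) (m(i := m i - 1))
         ** matrix_inv (C i - mat (of_nat n1)) ** matrix_inv (C i - mat (of_nat (n1 - 1))))"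
proof -
  let ?slot = "FC_coeff_slot k A B C m i (Suc t)"
  let ?slot' = "FC_coeff_slot k (A + mat 1) (B + mat 1) C m i t"
  define Y where "Y n1 = mpoch_inv (C i + mat (of_int (2 - int n1))) t
    ** matrix_inv (C i - mat (of_nat n1)) ** matrix_inv (C i - mat (of_nat (n1 - 1)))" for n1
  have m_upd: "m(i := Suc t) = m"
    using mi by auto
  have Ci_neg: "C i + mat (of_int (- int n)) = C i - mat (of_nat n)"
    by (vector mat_def)
  have "FC_coeff k A B (C(i := C i - mat (of_nat n))) m = ?slot (mpoch_inv (C i - mat (of_nat n)) (Suc t))"
    using FC_coeff_Ci_shift[where z = "- int n" and m = m and q = "Suc t"] by (simp only: Ci_neg m_upd order_refl)
  also have "\<dots> = ?slot (mpoch_inv (C i) (Suc t) + real (Suc t) *\<^sub>R (\<Sum>n1\<in>{1..n}. Y n1))"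
    unfolding Y_def using C_up[OF i_less] Ci_down by (simp only: mpoch_inv_diff_sum)
  also have "\<dots> = ?slot (mpoch_inv (C i) (Suc t)) + A ** B ** ?slot' (\<Sum>n1\<in>{1..n}. Y n1)"
    by (simp only: FC_coeff_slot_add FC_coeff_slot_Suc[OF AB])
  also have "?slot (mpoch_inv (C i) (Suc t)) = FC_coeff k A B C m"
    using FC_coeff_Ci_shift[where z = 0 and m = m and q = "Suc t"] by (simp add: m_upd)
  also have "?slot' (\<Sum>n1\<in>{1..n}. Y n1) = (\<Sum>n1\<in>{1..n}. ?slot' (mpoch_inv (C i + mat (of_int (2 - int n1))) t)
      ** matrix_inv (C i - mat (of_nat n1)) ** matrix_inv (C i - mat (of_nat (n1 - 1))))"
    unfolding Y_def by (simp only: FC_coeff_slot_sum FC_coeff_slot_mult)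
  also have "\<dots> = (\<Sum>n1\<in>{1..n}.
      FC_coeff k (A + mat 1) (B + mat 1) (C(i := C i + mat (of_int (2 - int n1)))) (m(i := m i - 1))
      ** matrix_inv (C i - mat (of_nat n1)) ** matrix_inv (C i - mat (of_nat (n1 - 1))))"
  proof (rule sum.cong[OF refl])
    fix n1 assume "n1 \<in> {1..n}"
    then have "- int n \<le> 2 - int n1"
      by auto
    then show "?slot' (mpoch_inv (C i + mat (of_int (2 - int n1))) t)
        ** matrix_inv (C i - mat (of_nat n1)) ** matrix_inv (C i - mat (of_nat (n1 - 1))) =
      FC_coeff k (A + mat 1) (B + mat 1) (C(i := C i + mat (of_int (2 - int n1)))) (m(i := m i - 1))
        ** matrix_inv (C i - mat (of_nat n1)) ** matrix_inv (C i - mat (of_nat (n1 - 1)))"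
      by (simp only: FC_coeff_Ci_shift mi diff_Suc_1)
  qed
  finally show ?thesis .
qed

end

theorem mainTheorem10:
  fixes k :: nat and A B :: "complex^'n^'n" and C :: "nat \<Rightarrow> complex^'n^'n"
    and i n :: nat
  assumes "k \<ge> 1"
    and "\<And>j m. j < k \<Longrightarrow> invertible (C j + mat (of_nat m))"
    and "A ** B = B ** A"
    and "\<And>j l. j < k \<Longrightarrow> l < k \<Longrightarrow> C j ** C l = C l ** C j"
    and "i < k" and "n \<ge> 1"
    and "\<And>m. m \<le> n \<Longrightarrow> invertible (C i - mat (of_nat m))"
  shows "\<forall>m. (\<forall>j\<ge>k. m j = 0) \<longrightarrow>
    FC_coeff k A B (C(i := C i - mat (of_nat n))) m =
      FC_coeff k A B C m +
      (if 1 \<le> m i then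
         A ** B **
         (\<Sum>n1\<in>{1..n}.
            FC_coeff k (A + mat 1) (B + mat 1) (C(i := C i + mat (of_int (2 - int n1))))
              (m(i := m i - 1))
            ** matrix_inv (C i - mat (of_nat n1))
            ** matrix_inv (C i - mat (of_nat (n1 - 1))))
       else 0)"
proof (intro allI impI, goal_cases)
  case (1 m)
  show ?case
  proof (cases "m i")
    case 0
    then show ?thesis
      by (simp add: FC_coeff_fun_upd_zero)
  next
    case (Suc t)
    then show ?thesis
      using FC_coeff_Ci_down_Suc[where C = C and k = k and i = i and n = n and m = m and t = t,
          OF assms(5,2,4,7,3) Suc]
      by simp
  qed
qed

end
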